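(* Let $1\gg p,q\gg n^{-1}$. Let $G$ be an $n$-vertex $q$-cut-dense graph and let $S$ be a $p$-random subset of $V(G)$. Then with high probability every induced subgraph of $G$ whose vertex set contains $S$ is $p^{q^{-4}}q^5$-cut-dense.
   Context: A graph $G$ is $q$-cut-dense if for every partition $V(G)=A\cup B$ into disjoint sets, the number of edges between $A$ and $B$ is at least $q|A||B|$. A $p$-random subset contains each vertex independently with probability $p$. "$1\gg p,q\gg n^{-1}$" means $p,q$ are sufficiently small positive constants and $n$ is sufficiently large in terms of $p,q$; "with high probability" means with probability tending to $1$ as $n\to\infty$. *)

theory Defs
  imports Complex_Main
begin

definition simple_graph :: "nat set \<Rightarrow> (nat \<Rightarrow> nat \<Rightarrow> bool) \<Rightarrow> bool" where
  "simple_graph V E \<longleftrightarrow> finite V \<and> (\<forall>u v. E u v \<longrightarrow> E v u) \<and> (\<forall>v. \<not> E v v)"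

definition e_between :: "(nat \<Rightarrow> nat \<Rightarrow> bool) \<Rightarrow> nat set \<Rightarrow> nat set \<Rightarrow> nat" where
  "e_between E A B = card {(a, b). a \<in> A \<and> b \<in> B \<and> E a b}"

text \<open>Applied to a subset V of the
  vertices, this is cut-density of the induced subgraph G[V].\<close>
definition cut_dense :: "real \<Rightarrow> nat set \<Rightarrow> (nat \<Rightarrow> nat \<Rightarrow> bool) \<Rightarrow> bool" where
  "cut_dense q V E \<longleftrightarrow> (\<forall>A B. A \<union> B = V \<and> A \<inter> B = {} \<longrightarrow>
      real (e_between E A B) \<ge> q * real (card A) * real (card B))"

definition random_subset_prob :: "nat \<Rightarrow> real \<Rightarrow> (nat set \<Rightarrow> bool) \<Rightarrow> real" where
  "random_subset_prob n p P =
     (\<Sum>S\<in>{S. S \<subseteq> {0..<n} \<and> P S}. p ^ card S * (1 - p) ^ (n - card S))"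

end

(*
  A p-random set S is, with probability 1 - O(n^2 exp(-c n)), typical: no codegree, and
  no number of walks s x y t with x restricted to S, falls below p times its value in G by
  more than eps n resp. eps n^2 (a Chernoff bound and a union bound over O(n^2) events).

  Let S be typical, U a superset of S and A, B a cut of U. Cut-density gives every vertex
  degree about q n, so typicality gives it about p q n / 4 neighbours in S, and hence at least
  half of that many in A \<inter> S (the vertices X) or in B \<inter> S (the vertices Y). If half of A
  lies in Y, or half of B in X, these vertices alone supply enough A-B edges. Otherwise X and
  Y are both large, and cut-density of G across X, Y yields about q |A| |B| (p q n)^2 walks
  s x y t from A \<inter> S to B \<inter> S. By typicality a p^2 fraction of them has x, y in S, and
  such a walk inside U crosses the cut A, B, so e(A, B) is of order p^4 q^3 |A| |B|. For
  p, q <= 1/64 this dominates p^(1/q^4) q^5.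
*)

theory Submission
  imports Defs "HOL-Real_Asymp.Real_Asymp"
begin

section \<open>Random subsets\<close>

definition subset_weight :: "nat \<Rightarrow> real \<Rightarrow> nat set \<Rightarrow> real" where
  "subset_weight n p S = p ^ card S * (1 - p) ^ (n - card S)"

lemma subset_weight_nonneg: "0 \<le> p \<Longrightarrow> p \<le> 1 \<Longrightarrow> 0 \<le> subset_weight n p S"
  unfolding subset_weight_def by simp

lemma random_subset_prob_eq_sum:
  "random_subset_prob n p P = (\<Sum>S\<in>Pow {0..<n}. subset_weight n p S * of_bool (P S))"
proof -
  have "Pow {0..<n} \<inter> Collect P = {S. S \<subseteq> {0..<n} \<and> P S}" by auto
  then show ?thesis unfolding random_subset_prob_def subset_weight_def
    by (simp add: sum.inter_filter if_distrib cong: if_cong)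
qed

lemma sum_subset_weight_prod:
  "(\<Sum>S\<in>Pow {0..<n}. subset_weight n p S * (\<Prod>v\<in>S. f v)) = (\<Prod>v\<in>{0..<n}. p * f v + (1 - p))"
proof -
  have "(\<Prod>v\<in>{0..<n}. p * f v + (1 - p)) =
      (\<Sum>S\<in>Pow {0..<n}. (\<Prod>v\<in>S. p * f v) * (\<Prod>v\<in>{0..<n} - S. 1 - p))"
    by (rule prod_add) simp
  also have "\<dots> = (\<Sum>S\<in>Pow {0..<n}. subset_weight n p S * (\<Prod>v\<in>S. f v))"
  proof (rule sum.cong)
    fix S assume "S \<in> Pow {0..<n}"
    then have "card ({0..<n} - S) = n - card S"
      by (simp add: card_Diff_subset finite_subset)
    then show "(\<Prod>v\<in>S. p * f v) * (\<Prod>v\<in>{0..<n} - S. 1 - p) = subset_weight n p S * (\<Prod>v\<in>S. f v)"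
      unfolding subset_weight_def by (simp add: prod.distrib)
  qed simp
  finally show ?thesis ..
qed

lemma sum_subset_weight: "(\<Sum>S\<in>Pow {0..<n}. subset_weight n p S) = 1"
  using sum_subset_weight_prod[of n p "\<lambda>_. 1"] by simp

lemma random_subset_prob_mono:
  assumes "0 \<le> p" "p \<le> 1" "\<And>S. S \<subseteq> {0..<n} \<Longrightarrow> P S \<Longrightarrow> Q S"
  shows "random_subset_prob n p P \<le> random_subset_prob n p Q"
  unfolding random_subset_prob_eq_sum
  using assms by (intro sum_mono) (auto intro!: mult_left_mono subset_weight_nonneg)

lemma random_subset_prob_Not:
  "random_subset_prob n p (\<lambda>S. \<not> P S) = 1 - random_subset_prob n p P"
proof -
  have "random_subset_prob n p (\<lambda>S. \<not> P S) + random_subset_prob n p P =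
      (\<Sum>S\<in>Pow {0..<n}. subset_weight n p S)"
    unfolding random_subset_prob_eq_sum sum.distrib[symmetric]
    by (intro sum.cong) (auto simp: of_bool_def)
  then show ?thesis using sum_subset_weight[of n p] by simp
qed

lemma random_subset_prob_Bex_le:
  assumes "0 \<le> p" "p \<le> 1" "finite I"
  shows "random_subset_prob n p (\<lambda>S. \<exists>i\<in>I. P i S) \<le> (\<Sum>i\<in>I. random_subset_prob n p (P i))"
proof -
  have "of_bool (\<exists>i\<in>I. P i S) \<le> (\<Sum>i\<in>I. of_bool (P i S) :: real)" for S
    using assms(3) by (auto simp: Suc_le_eq card_gt_0_iff)
  then have "random_subset_prob n p (\<lambda>S. \<exists>i\<in>I. P i S)
      \<le> (\<Sum>S\<in>Pow {0..<n}. \<Sum>i\<in>I. subset_weight n p S * of_bool (P i S))"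
    unfolding random_subset_prob_eq_sum sum_distrib_left[symmetric]
    using subset_weight_nonneg[OF assms(1,2)] by (intro sum_mono mult_left_mono) auto
  also have "\<dots> = (\<Sum>i\<in>I. random_subset_prob n p (P i))"
    unfolding random_subset_prob_eq_sum by (rule sum.swap)
  finally show ?thesis .
qed

lemma exp_minus_le_quadratic:
  assumes "0 \<le> (x::real)"
  shows "exp (- x) \<le> 1 - x + x^2"
proof -
  have "exp (- x) \<le> 1 / (1 + x)"
    using exp_ge_add_one_self[of x] assms by (simp add: exp_minus divide_simps)
  also have "\<dots> \<le> 1 - x + x^2"
    using assms by (simp add: divide_simps power2_eq_square algebra_simps)
  finally show ?thesis .
qed

lemma bernoulli_exp_moment_le:
  fixes p l x :: real
  assumes p: "0 \<le> p" "p \<le> 1" and l: "0 \<le> l" and x: "0 \<le> x" "x \<le> 1"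
  shows "p * exp (- (l * x)) + (1 - p) \<le> exp (- (p * l * x) + l^2)"
proof -
  have "x^2 \<le> 1"
    using x by (simp add: power_le_one)
  then have "(l * x)^2 \<le> l^2"
    by (simp add: power_mult_distrib mult_left_le)
  then have "p * (l * x)^2 \<le> l^2"
    using p by (meson mult_left_le_one_le order_trans zero_le_power2)
  then have "p * exp (- (l * x)) + (1 - p) \<le> 1 + (- (p * l * x) + l^2)"
    using mult_left_mono[OF exp_minus_le_quadratic[of "l * x"] p(1)] l x
    by (simp add: algebra_simps)
  also have "\<dots> \<le> exp (- (p * l * x) + l^2)"
    by (rule exp_ge_add_one_self)
  finally show ?thesis .
qed

lemma random_subset_prob_sum_less_le_moment:
  assumes "0 \<le> p" "p \<le> 1" "0 \<le> l"
  shows "random_subset_prob n p (\<lambda>S. (\<Sum>u\<in>S. w u) < \<theta>)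
           \<le> exp (l * \<theta>) * (\<Prod>v\<in>{0..<n}. p * exp (- (l * w v)) + (1 - p))"
proof -
  have "of_bool ((\<Sum>u\<in>S. w u) < \<theta>) \<le> exp (l * \<theta>) * (\<Prod>v\<in>S. exp (- (l * w v)))"
    if "S \<in> Pow {0..<n}" for S
  proof -
    have "of_bool ((\<Sum>u\<in>S. w u) < \<theta>) \<le> exp (l * (\<theta> - (\<Sum>u\<in>S. w u)))"
      using assms(3) by (auto intro: mult_nonneg_nonneg)
    also have "\<dots> = exp (l * \<theta>) * exp (- (l * (\<Sum>u\<in>S. w u)))"
      by (simp add: right_diff_distrib exp_diff exp_minus divide_inverse)
    also have "\<dots> = exp (l * \<theta>) * (\<Prod>v\<in>S. exp (- (l * w v)))"
      using finite_subset[of S "{0..<n}"] that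
      by (simp add: exp_sum [symmetric] sum_negf sum_distrib_left)
    finally show ?thesis .
  qed
  then have "random_subset_prob n p (\<lambda>S. (\<Sum>u\<in>S. w u) < \<theta>)
      \<le> (\<Sum>S\<in>Pow {0..<n}. subset_weight n p S * (exp (l * \<theta>) * (\<Prod>v\<in>S. exp (- (l * w v)))))"
    unfolding random_subset_prob_eq_sum using subset_weight_nonneg[OF assms(1,2)]
    by (intro sum_mono mult_left_mono) simp_all
  also have "\<dots> = exp (l * \<theta>) * (\<Prod>v\<in>{0..<n}. p * exp (- (l * w v)) + (1 - p))"
    by (simp add: sum_distrib_left[symmetric] sum_subset_weight_prod
        mult.left_commute[of _ "exp (l * \<theta>)"])
  finally show ?thesis .
qed

lemma random_subset_prob_lower_tail:
  assumes p: "0 \<le> p" "p \<le> 1" and e: "0 \<le> e"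
    and w: "\<And>v. v < n \<Longrightarrow> 0 \<le> w v \<and> w v \<le> 1"
  shows "random_subset_prob n p (\<lambda>S. (\<Sum>u\<in>S. w u) < p * (\<Sum>u\<in>{0..<n}. w u) - e * n)
           \<le> exp (- (e^2 * n / 4))"
proof -
  define l where "l = e / 2"
  define \<theta> where "\<theta> = p * (\<Sum>u\<in>{0..<n}. w u) - e * n"
  have l: "0 \<le> l" using e by (simp add: l_def)
  have "random_subset_prob n p (\<lambda>S. (\<Sum>u\<in>S. w u) < \<theta>)
      \<le> exp (l * \<theta>) * (\<Prod>v\<in>{0..<n}. p * exp (- (l * w v)) + (1 - p))"
    by (rule random_subset_prob_sum_less_le_moment[OF p l])
  also have "\<dots> \<le> exp (l * \<theta>) * (\<Prod>v\<in>{0..<n}. exp (- (p * l * w v) + l^2))"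
    using p w l by (intro mult_left_mono prod_mono conjI bernoulli_exp_moment_le) auto
  also have "\<dots> = exp (l * \<theta> + (\<Sum>v\<in>{0..<n}. - (p * l * w v) + l^2))"
    by (simp add: exp_sum exp_add)
  also have "l * \<theta> + (\<Sum>v\<in>{0..<n}. - (p * l * w v) + l^2) = - (e^2 * n / 4)"
  proof -
    have "(\<Sum>v\<in>{0..<n}. - (p * l * w v) + l^2) = - (p * l * (\<Sum>v\<in>{0..<n}. w v)) + n * l^2"
      by (simp add: sum.distrib sum_negf sum_distrib_left sum_subtractf)
    then show ?thesis
      unfolding \<theta>_def l_def by (simp add: power2_eq_square algebra_simps)
  qed
  finally show ?thesis unfolding \<theta>_def .
qed

lemma random_subset_prob_lower_tail_Bex:
  assumes "0 \<le> p" "p \<le> 1" "0 \<le> e" "finite I"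
    and "\<And>i v. i \<in> I \<Longrightarrow> v < n \<Longrightarrow> 0 \<le> w i v \<and> w i v \<le> 1"
  shows "random_subset_prob n p
           (\<lambda>S. \<exists>i\<in>I. (\<Sum>u\<in>S. w i u) < p * (\<Sum>u\<in>{0..<n}. w i u) - e * n)
         \<le> card I * exp (- (e^2 * n / 4))"
proof -
  have "random_subset_prob n p (\<lambda>S. \<exists>i\<in>I. (\<Sum>u\<in>S. w i u) < p * (\<Sum>u\<in>{0..<n}. w i u) - e * n)
      \<le> (\<Sum>i\<in>I. random_subset_prob n p (\<lambda>S. (\<Sum>u\<in>S. w i u) < p * (\<Sum>u\<in>{0..<n}. w i u) - e * n))"
    using assms by (intro random_subset_prob_Bex_le)
  also have "\<dots> \<le> (\<Sum>i\<in>I. exp (- (e^2 * n / 4)))"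
    using assms by (intro sum_mono random_subset_prob_lower_tail) auto
  finally show ?thesis by simp
qed

section \<open>Degrees, codegrees and walks\<close>

definition deg_in :: "('a \<Rightarrow> 'a \<Rightarrow> bool) \<Rightarrow> 'a set \<Rightarrow> 'a \<Rightarrow> real" where
  "deg_in E X v = (\<Sum>u\<in>X. of_bool (E v u))"

definition codeg :: "('a \<Rightarrow> 'a \<Rightarrow> bool) \<Rightarrow> 'a set \<Rightarrow> 'a \<Rightarrow> 'a \<Rightarrow> real" where
  "codeg E X v w = (\<Sum>u\<in>X. of_bool (E v u \<and> E w u))"

text \<open>The number of walks \<open>s x y t\<close> with \<open>x \<in> X\<close> and \<open>y \<in> Y\<close>.\<close>
definition walks3 :: "('a \<Rightarrow> 'a \<Rightarrow> bool) \<Rightarrow> 'a set \<Rightarrow> 'a set \<Rightarrow> 'a \<Rightarrow> 'a \<Rightarrow> real" where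
  "walks3 E X Y s t = (\<Sum>x\<in>X. of_bool (E s x) * codeg E Y x t)"

lemma deg_in_nonneg: "0 \<le> deg_in E X v"
  unfolding deg_in_def by (simp add: sum_nonneg)

lemma codeg_nonneg: "0 \<le> codeg E X v w"
  unfolding codeg_def by (simp add: sum_nonneg)

lemma deg_in_le_card: "deg_in E X v \<le> card X"
  unfolding deg_in_def using sum_mono[of X "\<lambda>u. of_bool (E v u)" "\<lambda>_. 1::real"] by simp

lemma codeg_le_card: "codeg E X v w \<le> card X"
  unfolding codeg_def using sum_mono[of X "\<lambda>u. of_bool (E v u \<and> E w u)" "\<lambda>_. 1::real"] by simp

lemma codeg_self: "codeg E X v v = deg_in E X v"
  unfolding codeg_def deg_in_def by simp

lemma deg_in_mono: "X \<subseteq> Y \<Longrightarrow> finite Y \<Longrightarrow> deg_in E X v \<le> deg_in E Y v"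
  unfolding deg_in_def by (rule sum_mono2) auto

lemma deg_in_Un:
  "finite X \<Longrightarrow> finite Y \<Longrightarrow> X \<inter> Y = {} \<Longrightarrow> deg_in E (X \<union> Y) v = deg_in E X v + deg_in E Y v"
  unfolding deg_in_def by (rule sum.union_disjoint)

lemma e_between_eq_sum_deg_in:
  assumes "finite A" "finite B"
  shows "real (e_between E A B) = (\<Sum>a\<in>A. deg_in E B a)"
proof -
  have "{(a, b). a \<in> A \<and> b \<in> B \<and> E a b} = Sigma A (\<lambda>a. {b\<in>B. E a b})" by auto
  then have "e_between E A B = (\<Sum>a\<in>A. card {b\<in>B. E a b})"
    unfolding e_between_def using assms by simp
  then show ?thesis
    unfolding deg_in_def using assms by (simp add: Int_def)
qed

lemma e_between_commute:
  assumes "\<And>u v. E u v \<Longrightarrow> E v u"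
  shows "e_between E A B = e_between E B A"
proof -
  have "{(a, b). a \<in> A \<and> b \<in> B \<and> E a b} = prod.swap ` {(b, a). b \<in> B \<and> a \<in> A \<and> E b a}"
    using assms by auto
  then show ?thesis
    unfolding e_between_def by (simp add: card_image)
qed

lemma cut_denseD:
  "cut_dense q V E \<Longrightarrow> A \<union> B = V \<Longrightarrow> A \<inter> B = {} \<Longrightarrow>
    q * card A * card B \<le> e_between E A B"
  unfolding cut_dense_def by blast

lemma cut_dense_mono:
  assumes "q' \<le> q" "cut_dense q V E"
  shows "cut_dense q' V E"
  unfolding cut_dense_def
proof (intro allI impI)
  fix A B assume "A \<union> B = V \<and> A \<inter> B = {}"
  then have "q * card A * card B \<le> e_between E A B"
    using assms(2) by (blast intro: cut_denseD)
  moreover have "q' * card A * card B \<le> q * card A * card B"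
    using assms(1) by (intro mult_right_mono) auto
  ultimately show "q' * card A * card B \<le> e_between E A B"
    by linarith
qed

lemma cut_dense_deg_in_ge:
  assumes "simple_graph V E" "cut_dense q V E" "v \<in> V"
  shows "q * (real (card V) - 1) \<le> deg_in E V v"
proof -
  have fin: "finite V" and irrefl: "\<not> E v v"
    using assms(1) unfolding simple_graph_def by auto
  have "1 \<le> card V"
    using assms(3) fin by (metis One_nat_def Suc_leI card_gt_0_iff empty_iff)
  then have "real (card (V - {v})) = real (card V) - 1"
    using assms(3) by (simp add: card_Diff_singleton of_nat_diff)
  then have "q * (real (card V) - 1) = q * real (card {v}) * real (card (V - {v}))"
    by simp
  also have "\<dots> \<le> real (e_between E {v} (V - {v}))"
    using assms(3) by (intro cut_denseD[OF assms(2)]) auto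
  also have "\<dots> = deg_in E (V - {v}) v"
    using fin by (simp add: e_between_eq_sum_deg_in)
  also have "\<dots> = deg_in E V v"
    unfolding deg_in_def using fin irrefl by (intro sum.mono_neutral_left) auto
  finally show ?thesis .
qed

lemma e_between_ge_of_many_high_deg:
  fixes d :: real
  assumes "finite A" "finite B" "C \<subseteq> A" "card A \<le> 2 * card C" "0 \<le> d"
    and "\<And>x. x \<in> C \<Longrightarrow> d \<le> deg_in E B x"
  shows "card A * d / 2 \<le> e_between E A B"
proof -
  have "real (card A) \<le> 2 * real (card C)"
    using assms(4) by linarith
  then have "card A * d / 2 \<le> card C * d"
    using mult_right_mono[OF _ assms(5)] by fastforce
  also have "\<dots> \<le> (\<Sum>x\<in>C. deg_in E B x)"
    using assms(6) by (rule sum_bounded_below)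
  also have "\<dots> \<le> (\<Sum>x\<in>A. deg_in E B x)"
    using assms(1,3) by (intro sum_mono2) (auto simp: deg_in_nonneg)
  also have "\<dots> = e_between E A B"
    using assms(1,2) by (simp add: e_between_eq_sum_deg_in)
  finally show ?thesis .
qed

lemma power4_mult_power3_le:
  fixes p q :: real
  assumes "0 \<le> p" "p \<le> 1" "0 \<le> q" "q \<le> 1"
  shows "p^4 * q^3 \<le> p * q"
proof -
  have "p^3 * q^2 \<le> 1"
    using assms by (simp add: mult_le_one power_le_one)
  then have "p * q * (p^3 * q^2) \<le> p * q"
    using assms by (simp add: mult_left_le)
  then show ?thesis
    by (simp add: power_numeral_reduce algebra_simps)
qed

lemma cut_ge_of_many_high_deg:
  assumes "finite A" "finite B" "real (card B) \<le> n" "C \<subseteq> A" "card A \<le> 2 * card C"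
    and "0 < p" "p \<le> 1" "0 < q" "q \<le> 1"
    and "\<And>x. x \<in> C \<Longrightarrow> p * q * n / 8 \<le> deg_in E B x"
  shows "p^4 * q^3 / 1536 * card A * card B \<le> e_between E A B"
proof -
  have pq: "0 < p * q"
    using assms(6,8) by simp
  have n: "0 \<le> n"
    using assms(3) of_nat_0_le_iff order_trans by blast
  have "p^4 * q^3 / 1536 \<le> p * q / 16"
    using power4_mult_power3_le[of p q] pq assms(6-9) by linarith
  then have "p^4 * q^3 / 1536 * card B \<le> p * q / 16 * n"
    by (rule mult_mono[OF _ assms(3)]) (use pq in simp_all)
  then have "card A * (p^4 * q^3 / 1536 * card B) \<le> card A * (p * q / 16 * n)"
    by (rule mult_left_mono) simp
  then have "p^4 * q^3 / 1536 * card A * card B \<le> card A * (p * q * n / 8) / 2"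
    by (simp add: ac_simps)
  also have "\<dots> \<le> e_between E A B"
    using pq n assms(10) by (intro e_between_ge_of_many_high_deg[OF assms(1,2,4,5)]) simp_all
  finally show ?thesis .
qed

lemma sum_edges_weighted_ge:
  assumes "cut_dense q V E" "finite V" "X \<union> Y = V" "X \<inter> Y = {}" "0 \<le> d"
    and "\<And>x. x \<in> X \<Longrightarrow> d \<le> f x" "\<And>y. y \<in> Y \<Longrightarrow> d \<le> g y"
    and "\<And>v. 0 \<le> f v" "\<And>v. 0 \<le> g v"
  shows "q * card X * card Y * d^2 \<le> (\<Sum>x\<in>V. \<Sum>y\<in>V. of_bool (E x y) * f x * g y)"
proof -
  have fin: "finite X" "finite Y"
    using assms(2,3) by auto
  have "q * card X * card Y * d^2 \<le> e_between E X Y * d^2"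
    using cut_denseD[OF assms(1,3,4)] by (simp add: mult_right_mono)
  also have "\<dots> = (\<Sum>x\<in>X. \<Sum>y\<in>Y. of_bool (E x y) * d^2)"
    using fin by (simp add: e_between_eq_sum_deg_in deg_in_def sum_distrib_right
        del: sum_of_bool_eq sum_mult_of_bool_eq sum_of_bool_mult_eq)
  also have "\<dots> \<le> (\<Sum>x\<in>X. \<Sum>y\<in>Y. of_bool (E x y) * f x * g y)"
    using assms(5-9) by (intro sum_mono) (auto simp: power2_eq_square intro!: mult_mono)
  also have "\<dots> \<le> (\<Sum>x\<in>X. \<Sum>y\<in>V. of_bool (E x y) * f x * g y)"
    using assms(2,3,8,9) by (intro sum_mono sum_mono2) auto
  also have "\<dots> \<le> (\<Sum>x\<in>V. \<Sum>y\<in>V. of_bool (E x y) * f x * g y)"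
    using assms(2,3,8,9) by (intro sum_mono2) (auto intro: sum_nonneg)
  finally show ?thesis .
qed

lemma sum_swap_pairs:
  "(\<Sum>x\<in>A. \<Sum>y\<in>B. \<Sum>s\<in>C. \<Sum>t\<in>D. f x y s t) = (\<Sum>s\<in>C. \<Sum>t\<in>D. \<Sum>x\<in>A. \<Sum>y\<in>B. f x y s t)"
proof -
  have "(\<Sum>x\<in>A. \<Sum>y\<in>B. \<Sum>s\<in>C. \<Sum>t\<in>D. f x y s t) = (\<Sum>x\<in>A. \<Sum>s\<in>C. \<Sum>y\<in>B. \<Sum>t\<in>D. f x y s t)"
    by (rule sum.cong[OF refl], rule sum.swap)
  also have "\<dots> = (\<Sum>s\<in>C. \<Sum>x\<in>A. \<Sum>t\<in>D. \<Sum>y\<in>B. f x y s t)"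
    by (subst sum.swap, rule sum.cong[OF refl], rule sum.cong[OF refl], rule sum.swap)
  also have "\<dots> = (\<Sum>s\<in>C. \<Sum>t\<in>D. \<Sum>x\<in>A. \<Sum>y\<in>B. f x y s t)"
    by (rule sum.cong[OF refl], rule sum.swap)
  finally show ?thesis .
qed

lemma sum_edges_deg_in_eq_sum_walks3:
  assumes "\<And>u v. E u v \<Longrightarrow> E v u"
  shows "(\<Sum>x\<in>V. \<Sum>y\<in>V. of_bool (E x y) * deg_in E S x * deg_in E T y)
    = (\<Sum>s\<in>S. \<Sum>t\<in>T. walks3 E V V s t)"
proof -
  have "of_bool (E x y) * deg_in E S x * deg_in E T y
      = (\<Sum>s\<in>S. \<Sum>t\<in>T. of_bool (E s x) * of_bool (E x y \<and> E t y))" for x y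
  proof -
    have "deg_in E S x * deg_in E T y = (\<Sum>s\<in>S. \<Sum>t\<in>T. of_bool (E x s) * of_bool (E y t))"
      unfolding deg_in_def by (rule sum_product)
    then have "of_bool (E x y) * deg_in E S x * deg_in E T y
        = (\<Sum>s\<in>S. \<Sum>t\<in>T. of_bool (E x y) * (of_bool (E x s) * of_bool (E y t)))"
      by (simp only: mult.assoc sum_distrib_left)
    also have "\<dots> = (\<Sum>s\<in>S. \<Sum>t\<in>T. of_bool (E s x) * of_bool (E x y \<and> E t y))"
      using assms by (intro sum.cong refl) (auto simp: of_bool_def)
    finally show ?thesis .
  qed
  then have "(\<Sum>x\<in>V. \<Sum>y\<in>V. of_bool (E x y) * deg_in E S x * deg_in E T y)
      = (\<Sum>x\<in>V. \<Sum>y\<in>V. \<Sum>s\<in>S. \<Sum>t\<in>T. of_bool (E s x) * of_bool (E x y \<and> E t y))"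
    by simp
  also have "\<dots> = (\<Sum>s\<in>S. \<Sum>t\<in>T. \<Sum>x\<in>V. \<Sum>y\<in>V. of_bool (E s x) * of_bool (E x y \<and> E t y))"
    by (rule sum_swap_pairs)
  also have "\<dots> = (\<Sum>s\<in>S. \<Sum>t\<in>T. walks3 E V V s t)"
    unfolding walks3_def codeg_def sum_distrib_left ..
  finally show ?thesis .
qed

text \<open>Each walk \<open>s x y t\<close> through \<open>S \<subseteq> A \<union> B\<close> has \<open>x \<in> B\<close>, or \<open>x \<in> A\<close> and \<open>y \<in> B\<close>,
  or \<open>y \<in> A\<close>.\<close>
lemma walks3_le_crossing:
  assumes "finite A" "finite B" "S \<subseteq> A \<union> B"
  shows "walks3 E S S s t \<le> card S * deg_in E B s + e_between E A B + card S * deg_in E A t"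
proof -
  have fin: "finite S"
    using assms finite_subset by blast
  have restrict: "(\<Sum>x\<in>S. of_bool (x \<in> C) * f x) = sum f (S \<inter> {x. x \<in> C})"
    for C and f :: "nat \<Rightarrow> real"
    by (rule sum_of_bool_mult_eq[OF fin])
  have "walks3 E S S s t = (\<Sum>x\<in>S. \<Sum>y\<in>S. of_bool (E s x) * of_bool (E x y \<and> E t y))"
    unfolding walks3_def codeg_def sum_distrib_left ..
  also have "\<dots> \<le> (\<Sum>x\<in>S. \<Sum>y\<in>S. of_bool (x \<in> B) * of_bool (E s x)
      + of_bool (x \<in> A) * (of_bool (y \<in> B) * of_bool (E x y)) + of_bool (y \<in> A) * of_bool (E t y))"
    using assms(3) by (intro sum_mono) (auto simp: of_bool_def)
  also have "\<dots> = real (card S) * (\<Sum>x\<in>S. of_bool (x \<in> B) * of_bool (E s x))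
      + (\<Sum>x\<in>S. of_bool (x \<in> A) * (\<Sum>y\<in>S. of_bool (y \<in> B) * of_bool (E x y)))
      + real (card S) * (\<Sum>y\<in>S. of_bool (y \<in> A) * of_bool (E t y))"
    by (simp only: sum.distrib sum_constant sum_distrib_left[symmetric] sum.swap[of _ S S])
  also have "\<dots> = card S * deg_in E (S \<inter> {x. x \<in> B}) s
      + (\<Sum>x\<in>S \<inter> {x. x \<in> A}. deg_in E (S \<inter> {y. y \<in> B}) x)
      + card S * deg_in E (S \<inter> {x. x \<in> A}) t"
    unfolding restrict deg_in_def ..
  also have "\<dots> \<le> card S * deg_in E B s + (\<Sum>x\<in>S \<inter> {x. x \<in> A}. deg_in E B x)
      + card S * deg_in E A t"
    using assms(1,2) by (intro add_mono mult_left_mono deg_in_mono sum_mono) auto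
  also have "\<dots> \<le> card S * deg_in E B s + (\<Sum>x\<in>A. deg_in E B x) + card S * deg_in E A t"
    using assms(1) by (intro add_mono order_refl sum_mono2) (auto simp: deg_in_nonneg)
  also have "\<dots> = card S * deg_in E B s + e_between E A B + card S * deg_in E A t"
    using assms(1,2) by (simp add: e_between_eq_sum_deg_in)
  finally show ?thesis .
qed

lemma sum_walks3_crossing_le:
  assumes "finite A" "finite B" "S \<subseteq> A \<union> B" "\<And>u v. E u v \<Longrightarrow> E v u"
  shows "(\<Sum>s\<in>A \<inter> S. \<Sum>t\<in>B \<inter> S. walks3 E S S s t) \<le> 3 * real (card S) ^ 2 * e_between E A B"
proof -
  define m e where "m = real (card S)" and "e = real (e_between E A B)"
  have "finite S"
    using assms(1-3) finite_subset by blast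
  then have cards: "card (A \<inter> S) \<le> m" "card (B \<inter> S) \<le> m"
    unfolding m_def by (simp_all add: card_mono)
  have "(\<Sum>s\<in>A \<inter> S. deg_in E B s) \<le> (\<Sum>s\<in>A. deg_in E B s)"
    using assms(1) by (intro sum_mono2) (auto simp: deg_in_nonneg)
  then have degB: "(\<Sum>s\<in>A \<inter> S. deg_in E B s) \<le> e"
    unfolding e_def using assms(1,2) by (simp add: e_between_eq_sum_deg_in)
  have "(\<Sum>t\<in>B \<inter> S. deg_in E A t) \<le> (\<Sum>t\<in>B. deg_in E A t)"
    using assms(2) by (intro sum_mono2) (auto simp: deg_in_nonneg)
  then have degA: "(\<Sum>t\<in>B \<inter> S. deg_in E A t) \<le> e"
    unfolding e_def using e_between_commute[OF assms(4), where A=A and B=B]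
      e_between_eq_sum_deg_in[OF assms(2,1), of E] by simp
  have "(\<Sum>s\<in>A \<inter> S. \<Sum>t\<in>B \<inter> S. walks3 E S S s t)
      \<le> (\<Sum>s\<in>A \<inter> S. \<Sum>t\<in>B \<inter> S. m * deg_in E B s + e + m * deg_in E A t)"
    unfolding m_def e_def using assms(1-3) by (intro sum_mono walks3_le_crossing)
  also have "\<dots> = card (B \<inter> S) * m * (\<Sum>s\<in>A \<inter> S. deg_in E B s)
      + card (A \<inter> S) * card (B \<inter> S) * e + card (A \<inter> S) * m * (\<Sum>t\<in>B \<inter> S. deg_in E A t)"
    by (simp add: sum.distrib sum_distrib_left algebra_simps)
  also have "\<dots> \<le> m * m * e + m * m * e + m * m * e"
    using cards degA degB mult_mono[OF cards] by (intro add_mono mult_mono)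
      (auto simp: sum_nonneg deg_in_nonneg e_def)
  finally show ?thesis
    unfolding m_def e_def by (simp add: power2_eq_square)
qed

lemma card_le_twice_Int_cases:
  assumes "finite A" "finite B" "finite X" "finite Y" "A \<subseteq> X \<union> Y" "B \<subseteq> X \<union> Y" "X \<inter> Y = {}"
  shows "card A \<le> 2 * card (A \<inter> Y) \<or> card B \<le> 2 * card (B \<inter> X)
    \<or> card A \<le> 2 * card X \<and> card B \<le> 2 * card Y"
proof -
  have "A - X = A \<inter> Y" "B - Y = B \<inter> X"
    using assms(5-7) by auto
  then have "card A = card (A \<inter> X) + card (A \<inter> Y)" "card B = card (B \<inter> Y) + card (B \<inter> X)"
    using card_Int_Diff[OF assms(1), of X] card_Int_Diff[OF assms(2), of Y] by simp_all
  moreover have "card (A \<inter> X) \<le> card X" "card (B \<inter> Y) \<le> card Y"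
    using assms(3,4) by (simp_all add: card_mono)
  ultimately show ?thesis
    by linarith
qed

section \<open>Typical subsets\<close>

definition typical :: "real \<Rightarrow> real \<Rightarrow> nat set \<Rightarrow> (nat \<Rightarrow> nat \<Rightarrow> bool) \<Rightarrow> nat set \<Rightarrow> bool" where
  "typical p \<epsilon> V E S \<longleftrightarrow>
     (\<forall>v\<in>V. \<forall>w\<in>V. p * codeg E V v w - \<epsilon> * card V \<le> codeg E S v w) \<and>
     (\<forall>s\<in>V. \<forall>t\<in>V. p * walks3 E V V s t - \<epsilon> * real (card V) ^ 2 \<le> walks3 E S V s t)"

lemma typical_deg_in_ge:
  assumes "simple_graph V E" "cut_dense q V E" "typical p \<epsilon> V E S" "v \<in> V"
    and "2 \<le> card V" "0 \<le> p" "0 \<le> q" "\<epsilon> \<le> p * q / 4"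
  shows "p * q * card V / 4 \<le> deg_in E S v"
proof -
  define n where "n = real (card V)"
  have "p * q * n / 4 \<le> p * (q * (n - 1)) - \<epsilon> * n"
  proof -
    have "p * q * (n / 2) \<le> p * q * (n - 1)"
      using assms(5-7) unfolding n_def by (intro mult_left_mono) auto
    moreover have "\<epsilon> * n \<le> p * q / 4 * n"
      unfolding n_def by (rule mult_right_mono[OF assms(8)]) simp
    ultimately show ?thesis
      by (simp add: algebra_simps)
  qed
  also have "\<dots> \<le> p * deg_in E V v - \<epsilon> * n"
    using cut_dense_deg_in_ge[OF assms(1,2,4)] assms(6) unfolding n_def
    by (simp add: mult_left_mono)
  also have "\<dots> \<le> deg_in E S v"
    using assms(3,4) unfolding typical_def n_def codeg_self[symmetric] by blast
  finally show ?thesis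
    unfolding n_def .
qed

lemma typical_walks3_ge:
  assumes "typical p \<epsilon> V E S" "S \<subseteq> V" "finite V" "s \<in> V" "t \<in> V"
    and "0 \<le> p" "p \<le> 1" "0 \<le> \<epsilon>"
  shows "p^2 * walks3 E V V s t - 2 * \<epsilon> * real (card V) ^ 2 \<le> walks3 E S S s t"
proof -
  define n where "n = real (card V)"
  have deg: "deg_in E S s \<le> n"
    using deg_in_le_card[of E S s] card_mono[OF assms(3,2)] unfolding n_def by linarith
  have "p^2 * walks3 E V V s t - 2 * \<epsilon> * n^2 \<le> p * (p * walks3 E V V s t - \<epsilon> * n^2) - \<epsilon> * n * n"
  proof -
    have "p * (\<epsilon> * n^2) \<le> \<epsilon> * n^2"
      using assms(6-8) by (intro mult_left_le_one_le) auto
    moreover have "p * (p * walks3 E V V s t - \<epsilon> * n^2) - \<epsilon> * n * n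
        = p^2 * walks3 E V V s t - p * (\<epsilon> * n^2) - \<epsilon> * n^2"
      by (simp add: power2_eq_square algebra_simps)
    ultimately show ?thesis
      by linarith
  qed
  also have "\<dots> \<le> p * walks3 E S V s t - \<epsilon> * n * deg_in E S s"
    using assms(1,4,5) assms(6,8) deg unfolding typical_def n_def
    by (intro diff_mono mult_left_mono) auto
  also have "\<dots> = (\<Sum>x\<in>S. of_bool (E s x) * (p * codeg E V x t - \<epsilon> * n))"
    unfolding walks3_def deg_in_def
    by (simp add: sum_subtractf sum_distrib_left algebra_simps
        del: sum_of_bool_eq sum_mult_of_bool_eq sum_of_bool_mult_eq)
  also have "\<dots> \<le> walks3 E S S s t"
    unfolding walks3_def using assms(1,2,5) unfolding typical_def n_def
    by (intro sum_mono mult_left_mono) auto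
  finally show ?thesis
    unfolding n_def .
qed

lemma typical_sum_walks3_le:
  assumes sg: "simple_graph V E" and typS: "typical p \<epsilon> V E S"
    and p: "0 \<le> p" "p \<le> 1" and \<epsilon>: "0 \<le> \<epsilon>" and AB: "S \<subseteq> A \<union> B" "A \<union> B \<subseteq> V"
  shows "p^2 * (\<Sum>s\<in>A \<inter> S. \<Sum>t\<in>B \<inter> S. walks3 E V V s t)
    \<le> 3 * real (card V) ^ 2 * e_between E A B
      + real (card A) * real (card B) * (2 * \<epsilon> * real (card V) ^ 2)"
proof -
  define n where "n = real (card V)"
  have finV: "finite V" and sym: "\<And>u v. E u v \<Longrightarrow> E v u"
    using sg unfolding simple_graph_def by auto
  have fin: "finite A" "finite B" and SV: "S \<subseteq> V"
    using AB finV finite_subset by blast+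
  have "p^2 * (\<Sum>s\<in>A \<inter> S. \<Sum>t\<in>B \<inter> S. walks3 E V V s t)
      \<le> (\<Sum>s\<in>A \<inter> S. \<Sum>t\<in>B \<inter> S. walks3 E S S s t + 2 * \<epsilon> * n^2)"
    unfolding sum_distrib_left
  proof (intro sum_mono)
    fix s t assume "s \<in> A \<inter> S" "t \<in> B \<inter> S"
    then have "s \<in> V" "t \<in> V"
      using SV by auto
    from typical_walks3_ge[OF typS SV finV this p \<epsilon>]
    show "p^2 * walks3 E V V s t \<le> walks3 E S S s t + 2 * \<epsilon> * n^2"
      unfolding n_def by simp
  qed
  also have "\<dots> = (\<Sum>s\<in>A \<inter> S. \<Sum>t\<in>B \<inter> S. walks3 E S S s t)
      + real (card (A \<inter> S)) * real (card (B \<inter> S)) * (2 * \<epsilon> * n^2)"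
    by (simp add: sum.distrib)
  also have "\<dots> \<le> 3 * n^2 * e_between E A B
      + real (card A) * real (card B) * (2 * \<epsilon> * n^2)"
  proof (rule add_mono)
    have "real (card S) \<le> n"
      using card_mono[OF finV SV] unfolding n_def by simp
    then have "3 * real (card S) ^ 2 * e_between E A B \<le> 3 * n^2 * e_between E A B"
      by (intro mult_right_mono mult_left_mono power_mono) auto
    with sum_walks3_crossing_le[where E=E, OF fin AB(1) sym]
    show "(\<Sum>s\<in>A \<inter> S. \<Sum>t\<in>B \<inter> S. walks3 E S S s t) \<le> 3 * n^2 * e_between E A B"
      by linarith
    have "real (card (A \<inter> S)) * card (B \<inter> S) \<le> real (card A) * card B"
      using fin by (intro mult_mono) (auto simp: card_mono)
    then show "real (card (A \<inter> S)) * real (card (B \<inter> S)) * (2 * \<epsilon> * n^2)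
        \<le> real (card A) * real (card B) * (2 * \<epsilon> * n^2)"
      using \<epsilon> by (intro mult_right_mono) auto
  qed
  finally show ?thesis
    unfolding n_def .
qed

lemma typical_balanced_cut_ge:
  assumes sg: "simple_graph V E" and cd: "cut_dense q V E" and n: "0 < card V"
    and p: "0 \<le> p" "p \<le> 1" and q: "0 \<le> q"
    and typS: "typical p (p^4 * q^3 / 1024) V E S"
    and AB: "S \<subseteq> A \<union> B" "A \<union> B \<subseteq> V"
    and XY: "X \<union> Y = V" "X \<inter> Y = {}" "card A \<le> 2 * card X" "card B \<le> 2 * card Y"
    and degX: "\<And>x. x \<in> X \<Longrightarrow> p * q * card V / 8 \<le> deg_in E (A \<inter> S) x"
    and degY: "\<And>y. y \<in> Y \<Longrightarrow> p * q * card V / 8 \<le> deg_in E (B \<inter> S) y"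
  shows "p^4 * q^3 / 1536 * card A * card B \<le> e_between E A B"
proof -
  define n d where "n = real (card V)" and "d = p * q * n / 8"
  define a b e where "a = real (card A)" and "b = real (card B)" and "e = real (e_between E A B)"
  have finV: "finite V" and sym: "\<And>u v. E u v \<Longrightarrow> E v u"
    using sg unfolding simple_graph_def by auto
  have "q * (a * b / 4) * d^2 \<le> q * card X * card Y * d^2"
  proof -
    have "a * b \<le> (2 * real (card X)) * (2 * real (card Y))"
      unfolding a_def b_def using XY(3,4) by (intro mult_mono) auto
    then have "q * (a * b / 4) \<le> q * (card X * card Y)"
      using q by (intro mult_left_mono) auto
    from mult_right_mono[OF this zero_le_power2[of d]] show ?thesis
      by (simp add: mult.assoc)
  qed
  also have "\<dots> \<le> (\<Sum>x\<in>V. \<Sum>y\<in>V. of_bool (E x y) * deg_in E (A \<inter> S) x * deg_in E (B \<inter> S) y)"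
    using p q degX degY unfolding d_def n_def
    by (intro sum_edges_weighted_ge[OF cd finV XY(1,2)]) (auto simp: deg_in_nonneg)
  also have "\<dots> = (\<Sum>s\<in>A \<inter> S. \<Sum>t\<in>B \<inter> S. walks3 E V V s t)"
    by (rule sum_edges_deg_in_eq_sum_walks3[OF sym])
  finally have "p^2 * (q * (a * b / 4) * d^2) \<le> 3 * n^2 * e + a * b * (2 * (p^4 * q^3 / 1024) * n^2)"
    using typical_sum_walks3_le[OF sg typS p _ AB] p q mult_left_mono[of _ _ "p^2"]
    unfolding a_def b_def e_def n_def by fastforce
  then have "p^4 * q^3 * a * b * n^2 / 256 \<le> 3 * n^2 * e + p^4 * q^3 * a * b * n^2 / 512"
    unfolding d_def by (simp add: power2_eq_square power_numeral_reduce field_simps)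
  then have "(p^4 * q^3 / 1536 * a * b) * n^2 \<le> e * n^2"
    by (simp add: field_simps)
  then show ?thesis
    using n unfolding a_def b_def e_def n_def by simp
qed

lemma typical_cut_dense:
  assumes sg: "simple_graph V E" and cd: "cut_dense q V E" and n: "2 \<le> card V"
    and p: "0 < p" "p \<le> 1" and q: "0 < q" "q \<le> 1"
    and typS: "typical p (p^4 * q^3 / 1024) V E S" and SU: "S \<subseteq> U" "U \<subseteq> V"
  shows "cut_dense (p^4 * q^3 / 1536) U E"
  unfolding cut_dense_def
proof (intro allI impI, elim conjE)
  fix A B assume AB: "A \<union> B = U" "A \<inter> B = {}"
  define n where "n = real (card V)"
  define X where "X = {v\<in>V. deg_in E (B \<inter> S) v \<le> deg_in E (A \<inter> S) v}"
  define Y where "Y = V - X"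
  have finV: "finite V" and sym: "\<And>u v. E u v \<Longrightarrow> E v u"
    using sg unfolding simple_graph_def by auto
  have sub: "A \<subseteq> V" "B \<subseteq> V"
    using AB SU by auto
  have fin: "finite A" "finite B" "finite X" "finite Y"
    using sub finV finite_subset unfolding X_def Y_def by auto
  have cards: "real (card A) \<le> n" "real (card B) \<le> n"
    using card_mono[OF finV sub(1)] card_mono[OF finV sub(2)] unfolding n_def by simp_all
  have "S = (A \<inter> S) \<union> (B \<inter> S)" "(A \<inter> S) \<inter> (B \<inter> S) = {}"
    using AB SU by auto
  then have splitS: "deg_in E S v = deg_in E (A \<inter> S) v + deg_in E (B \<inter> S) v" for v
    using deg_in_Un[of "A \<inter> S" "B \<inter> S" E v] fin(1,2) by simp
  have "p^4 * q^3 / 1024 \<le> p * q / 4"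
    using power4_mult_power3_le[of p q] mult_pos_pos[OF p(1) q(1)] p q by linarith
  then have degS: "p * q * n / 4 \<le> deg_in E (A \<inter> S) v + deg_in E (B \<inter> S) v" if "v \<in> V" for v
    using typical_deg_in_ge[OF sg cd typS that n] p q unfolding splitS n_def by simp
  have degX: "p * q * n / 8 \<le> deg_in E (A \<inter> S) x" if "x \<in> X" for x
    using that degS unfolding X_def by force
  have degY: "p * q * n / 8 \<le> deg_in E (B \<inter> S) y" if "y \<in> Y" for y
    using that degS unfolding X_def Y_def by force
  consider "card A \<le> 2 * card (A \<inter> Y)" | "card B \<le> 2 * card (B \<inter> X)"
    | "card A \<le> 2 * card X" "card B \<le> 2 * card Y"
    using card_le_twice_Int_cases[OF fin] sub unfolding Y_def by blast
  then show "p^4 * q^3 / 1536 * card A * card B \<le> e_between E A B"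
  proof cases
    case 1
    have "p * q * n / 8 \<le> deg_in E B y" if "y \<in> A \<inter> Y" for y
      using degY[of y] deg_in_mono[of "B \<inter> S" B E y] fin(2) that by force
    then show ?thesis
      using p q by (intro cut_ge_of_many_high_deg[OF fin(1,2) cards(2) _ 1]) auto
  next
    case 2
    have "p * q * n / 8 \<le> deg_in E A x" if "x \<in> B \<inter> X" for x
      using degX[of x] deg_in_mono[of "A \<inter> S" A E x] fin(1) that by force
    then have "p^4 * q^3 / 1536 * card B * card A \<le> e_between E B A"
      using p q by (intro cut_ge_of_many_high_deg[OF fin(2,1) cards(1) _ 2]) auto
    then show ?thesis
      using e_between_commute[where E=E, OF sym] by (simp add: ac_simps)
  next
    case 3
    show ?thesis
      using AB SU fin n p q X_def Y_def degX degY unfolding n_def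
      by (intro typical_balanced_cut_ge[OF sg cd _ _ _ _ typS _ _ _ _ 3]) auto
  qed
qed

lemma powr_inverse_power4_mult_power5_le:
  fixes p q :: real
  assumes p: "0 < p" "p \<le> 1/64" and q: "0 < q" "q \<le> 1/64"
  shows "p powr (1 / q^4) * q^5 \<le> p^4 * q^3 / 1536"
proof -
  have "q^4 \<le> q^1"
    using q by (intro power_decreasing) auto
  then have "q^4 \<le> 1/4"
    using q by simp
  then have "4 \<le> 1 / q^4"
    using q by (simp add: field_simps)
  then have "p powr (1 / q^4) \<le> p^4"
    using p powr_mono'[of 4 "1 / q^4" p] by (simp add: powr_numeral)
  moreover have "q^5 \<le> q^3 / 1536"
  proof -
    have "q * q \<le> 1/64 * (1/64)"
      using q by (intro mult_mono) auto
    then have "q^2 \<le> 1/1536"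
      by (simp add: power2_eq_square)
    then show ?thesis
      using mult_left_mono[of "q^2" "1/1536" "q^3"] q by (simp add: power_add[symmetric])
  qed
  ultimately have "p powr (1 / q^4) * q^5 \<le> p^4 * (q^3 / 1536)"
    using p q by (intro mult_mono) auto
  then show ?thesis
    by simp
qed

lemma random_subset_prob_typical_ge:
  assumes p: "0 \<le> p" "p \<le> 1" and \<epsilon>: "0 \<le> \<epsilon>" and n: "0 < n"
  shows "1 - 2 * real n ^ 2 * exp (- (\<epsilon>^2 * n / 4))
    \<le> random_subset_prob n p (typical p \<epsilon> {0..<n} E)"
proof -
  define V where "V = {0..<n}"
  define I where "I = (UNIV :: bool set) \<times> V \<times> V"
  \<comment> \<open>Index \<open>(True, v, v')\<close> tracks a codegree, \<open>(False, s, t)\<close> a walk count,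
    scaled by \<open>1 / n\<close> into \<open>[0, 1]\<close>.\<close>
  define w where "w i u = (case i of
      (True, v, v') \<Rightarrow> of_bool (E v u \<and> E v' u)
    | (False, s, t) \<Rightarrow> of_bool (E s u) * codeg E V u t / n)" for i :: "bool \<times> nat \<times> nat" and u
  have "w i u \<le> 1" for i u
    using codeg_le_card[of E V u] n unfolding w_def V_def
    by (auto split: prod.split bool.split simp: divide_le_eq)
  moreover have "0 \<le> w i u" for i u
    unfolding w_def by (auto split: prod.split bool.split simp: codeg_nonneg)
  ultimately have "random_subset_prob n p
      (\<lambda>S. \<exists>i\<in>I. (\<Sum>u\<in>S. w i u) < p * (\<Sum>u\<in>{0..<n}. w i u) - \<epsilon> * n)
      \<le> card I * exp (- (\<epsilon>^2 * n / 4))"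
    using p \<epsilon> unfolding I_def V_def by (intro random_subset_prob_lower_tail_Bex) auto
  moreover have "card I = 2 * n^2"
    unfolding I_def V_def by (simp add: card_cartesian_product power2_eq_square)
  moreover have "random_subset_prob n p (\<lambda>S. \<not> typical p \<epsilon> V E S)
      \<le> random_subset_prob n p (\<lambda>S. \<exists>i\<in>I. (\<Sum>u\<in>S. w i u) < p * (\<Sum>u\<in>{0..<n}. w i u) - \<epsilon> * n)"
  proof (rule random_subset_prob_mono[OF p])
    fix S assume "\<not> typical p \<epsilon> V E S"
    then consider v v' where "v \<in> V" "v' \<in> V" "codeg E S v v' < p * codeg E V v v' - \<epsilon> * n"
      | s t where "s \<in> V" "t \<in> V" "walks3 E S V s t < p * walks3 E V V s t - \<epsilon> * real n ^ 2"
      unfolding typical_def V_def by fastforce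
    then show "\<exists>i\<in>I. (\<Sum>u\<in>S. w i u) < p * (\<Sum>u\<in>{0..<n}. w i u) - \<epsilon> * n"
    proof cases
      case (1 v v')
      then show ?thesis
        by (intro bexI[of _ "(True, v, v')"]) (auto simp: w_def I_def V_def codeg_def)
    next
      case (2 s t)
      then have "walks3 E S V s t / n < p * (walks3 E V V s t / n) - \<epsilon> * n"
        using n by (simp add: field_simps power2_eq_square)
      then show ?thesis
        using 2 unfolding walks3_def sum_divide_distrib
        by (intro bexI[of _ "(False, s, t)"]) (auto simp: w_def I_def V_def)
    qed
  qed
  ultimately show ?thesis
    using random_subset_prob_Not[of n p "typical p \<epsilon> V E"] unfolding V_def by simp
qed

lemma random_subset_prob_cut_dense_supersets_ge:
  assumes p: "0 < p" "p \<le> 1/64" and q: "0 < q" "q \<le> 1/64"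
    and n: "2 \<le> n" and G: "simple_graph {0..<n} E" "cut_dense q {0..<n} E"
  shows "1 - 2 * real n ^ 2 * exp (- ((p^4 * q^3 / 1024)^2 * n / 4))
    \<le> random_subset_prob n p
        (\<lambda>S. \<forall>U. S \<subseteq> U \<and> U \<subseteq> {0..<n} \<longrightarrow> cut_dense (p powr (1 / q ^ 4) * q ^ 5) U E)"
proof -
  have "1 - 2 * real n ^ 2 * exp (- ((p^4 * q^3 / 1024)^2 * n / 4))
      \<le> random_subset_prob n p (typical p (p^4 * q^3 / 1024) {0..<n} E)"
    using p q n by (intro random_subset_prob_typical_ge) auto
  also have "\<dots> \<le> random_subset_prob n p
      (\<lambda>S. \<forall>U. S \<subseteq> U \<and> U \<subseteq> {0..<n} \<longrightarrow> cut_dense (p powr (1 / q ^ 4) * q ^ 5) U E)"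
  proof (rule random_subset_prob_mono)
    fix S assume "typical p (p^4 * q^3 / 1024) {0..<n} E S"
    then have "cut_dense (p^4 * q^3 / 1536) U E" if "S \<subseteq> U" "U \<subseteq> {0..<n}" for U
      using p q n G that by (intro typical_cut_dense[of "{0..<n}" E q p S]) auto
    then show "\<forall>U. S \<subseteq> U \<and> U \<subseteq> {0..<n} \<longrightarrow> cut_dense (p powr (1 / q ^ 4) * q ^ 5) U E"
      using powr_inverse_power4_mult_power5_le[OF p q] by (blast intro: cut_dense_mono)
  qed (use p in auto)
  finally show ?thesis .
qed

theorem lemma3p12:
  shows "\<exists>c>0. \<forall>p q. 0 < p \<and> p \<le> c \<and> 0 < q \<and> q \<le> c \<longrightarrow>
    (\<forall>\<epsilon>>0. \<exists>N. \<forall>n\<ge>N. \<forall>E. simple_graph {0..<n} E \<and> cut_dense q {0..<n} E \<longrightarrow>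
       random_subset_prob n p
         (\<lambda>S. \<forall>U. S \<subseteq> U \<and> U \<subseteq> {0..<n} \<longrightarrow>
                  cut_dense (p powr (1 / q ^ 4) * q ^ 5) U E) \<ge> 1 - \<epsilon>)"
proof (intro exI[of _ "1/64"] conjI allI impI)
  fix p q \<epsilon> :: real
  assume pq: "0 < p \<and> p \<le> 1/64 \<and> 0 < q \<and> q \<le> 1/64" and \<epsilon>: "0 < \<epsilon>"
  define \<delta> where "\<delta> = p^4 * q^3 / 1024"
  have "0 < \<delta>^2 / 4"
    using pq unfolding \<delta>_def by simp
  then have "(\<lambda>n. 2 * real n ^ 2 * exp (- (\<delta>^2 * n / 4))) \<longlonglongrightarrow> 0"
    by real_asymp
  from order_tendstoD(2)[OF this \<epsilon>]
  obtain N where "\<And>n. N \<le> n \<Longrightarrow> 2 * real n ^ 2 * exp (- (\<delta>^2 * n / 4)) < \<epsilon>"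
    unfolding eventually_sequentially by auto
  with pq show "\<exists>N. \<forall>n\<ge>N. \<forall>E. simple_graph {0..<n} E \<and> cut_dense q {0..<n} E \<longrightarrow>
      random_subset_prob n p (\<lambda>S. \<forall>U. S \<subseteq> U \<and> U \<subseteq> {0..<n} \<longrightarrow>
        cut_dense (p powr (1 / q ^ 4) * q ^ 5) U E) \<ge> 1 - \<epsilon>"
    unfolding \<delta>_def
    by (intro exI[of _ "max 2 N"] allI impI order_trans[OF _ random_subset_prob_cut_dense_supersets_ge])
      (auto intro: less_imp_le)
qed simp

end
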